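(* Let $\mathcal X$ be a finite abelian group, $\mathcal Z$ a finite set, $P_{XZ}$ a distribution on $\mathcal X\times\mathcal Z$, and consider the conditional additive channel $W_{XZ|X}(x,z|x'):=P_{XZ}(x-x',z)$ from $\mathcal X$ to $\mathcal X\times\mathcal Z$. For any finite set $\mathcal M$, any distribution $P_M$ on $\mathcal M$ and any $c>0$, \[ P_{js}(P_M,W_{XZ|X})\le \sum_{\substack{(m,x,z):\ P_{XZ}(x,z)>0,\\ P_M(m)P_{X|Z}(x|z)\le c/|\mathcal X|}}P_M(m)P_{XZ}(x,z)\;+\;\frac1c, \] where $P_{X|Z}(x|z):=P_{XZ}(x,z)/P_Z(z)$ and $P_Z(z):=\sum_xP_{XZ}(x,z)$.
   Context: A code $\phi=(\mathsf e,\mathsf d)$ for a channel $W_{Y|X}$ consists of $\mathsf e:\mathcal M\to\mathcal X$ and $\mathsf d:\mathcal Y\to\mathcal M$ (here $\mathcal Y=\mathcal X\times\mathcal Z$); $P_{js}[\phi|P_M,W_{Y|X}]:=\sum_{m}P_M(m)W_{Y|X}(\{y:\mathsf d(y)\ne m\}|\mathsf e(m))$ and $P_{js}(P_M,W_{Y|X}):=\inf_\phi P_{js}[\phi|P_M,W_{Y|X}]$. *)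

theory Defs
  imports "HOL-Analysis.Analysis"
begin

definition is_distr :: "('a::finite \<Rightarrow> real) \<Rightarrow> bool" where
  "is_distr P \<longleftrightarrow> (\<forall>a. 0 \<le> P a) \<and> (\<Sum>a\<in>UNIV. P a) = 1"

text \<open>Error probability of the code (e, d) for message distribution PM and
  channel W (W x y = probability of output y given input x).\<close>
definition js_error ::
  "('m::finite \<Rightarrow> real) \<Rightarrow> ('a \<Rightarrow> 'b::finite \<Rightarrow> real) \<Rightarrow> ('m \<Rightarrow> 'a) \<Rightarrow> ('b \<Rightarrow> 'm) \<Rightarrow> real" where
  "js_error PM W e d = (\<Sum>m\<in>UNIV. PM m * (\<Sum>y\<in>{y. d y \<noteq> m}. W (e m) y))"

definition P_js ::
  "('m::finite \<Rightarrow> real) \<Rightarrow> ('a \<Rightarrow> 'b::finite \<Rightarrow> real) \<Rightarrow> real" where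
  "P_js PM W = (INF ed\<in>(UNIV :: (('m \<Rightarrow> 'a) \<times> ('b \<Rightarrow> 'm)) set). js_error PM W (fst ed) (snd ed))"

definition cond_add_channel ::
  "('x::ab_group_add \<times> 'z \<Rightarrow> real) \<Rightarrow> 'x \<Rightarrow> 'x \<times> 'z \<Rightarrow> real" where
  "cond_add_channel PXZ x' y = PXZ (fst y - x', snd y)"

definition marg_Z :: "('x::finite \<times> 'z \<Rightarrow> real) \<Rightarrow> 'z \<Rightarrow> real" where
  "marg_Z PXZ z = (\<Sum>x\<in>UNIV. PXZ (x, z))"

definition cond_X_Z :: "('x::finite \<times> 'z \<Rightarrow> real) \<Rightarrow> 'x \<Rightarrow> 'z \<Rightarrow> real" where
  "cond_X_Z PXZ x z = PXZ (x, z) / marg_Z PXZ z"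

end

theory Submission
  imports Defs
begin

text \<open>Random coding with a threshold decoder. Given the output (y, z), decode to any message m'
  with PM(m') P_X|Z(y - e(m') | z) > t. The true message m, sent with noise (x, z), is lost only
  if it fails the threshold itself, which costs the first sum, or if some m' ~= m passes it at
  y - e(m') = e(m) + x - e(m'). Averaged over all encoders e this difference is uniform on X, so
  the expected number of such competitors is at most 1/|X| times the number of pairs (m', x')
  above the threshold, which by Markov's inequality is at most 1/t. For t = c/|X| this is 1/c,
  and some encoder does no worse than the average.\<close>

lemma ex_le_of_sum_le_card_mult:
  fixes f :: "'a \<Rightarrow> real"
  assumes "finite A" and "A \<noteq> {}" and "sum f A \<le> real (card A) * K"
  shows "\<exists>a\<in>A. f a \<le> K"
proof (rule ccontr)
  assume "\<not> ?thesis"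
  then have "(\<Sum>a\<in>A. K) < sum f A"
    using assms(1,2) by (intro sum_strict_mono) auto
  with assms(3) show False by simp
qed

lemma of_bool_less_le_divide:
  fixes f t :: real
  assumes "0 \<le> f" and "0 < t"
  shows "of_bool (t < f) \<le> f / t"
  using assms by (simp add: of_bool_def)

lemma sum_shift_difference_funs:
  fixes h :: "'x::{ab_group_add,finite} \<Rightarrow> real" and m m' :: "'m::finite"
  assumes "m \<noteq> m'"
  shows "(\<Sum>e\<in>UNIV. h (e m + a - e m')) * real CARD('x) = real CARD('m \<Rightarrow> 'x) * (\<Sum>x\<in>UNIV. h x)"
proof -
  have shift_invariant: "(\<Sum>e\<in>UNIV. h (e m + a - e m')) = (\<Sum>e\<in>UNIV. h (e m + a - e m' - b))" for b
  proof -
    \<comment> \<open>moving the codeword of m' by b permutes the encoders and leaves e m unchanged\<close>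
    have "(\<Sum>e\<in>UNIV. h (e m + a - e m'))
       = (\<Sum>e\<in>UNIV. h ((e(m' := e m' + b)) m + a - (e(m' := e m' + b)) m'))"
      by (rule sum.reindex_bij_witness[where i="\<lambda>e. e(m' := e m' + b)" and j="\<lambda>e. e(m' := e m' - b)"]) auto
    also have "\<dots> = (\<Sum>e\<in>UNIV. h (e m + a - e m' - b))"
      using assms by (simp add: algebra_simps)
    finally show ?thesis .
  qed
  have "(\<Sum>e\<in>UNIV. h (e m + a - e m')) * real CARD('x)
      = (\<Sum>b\<in>UNIV. \<Sum>e\<in>UNIV. h (e m + a - e m' - b))"
    using shift_invariant by simp
  also have "\<dots> = (\<Sum>e\<in>UNIV. \<Sum>b\<in>UNIV. h (e m + a - e m' - b))"
    by (rule sum.swap)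
  also have "\<dots> = (\<Sum>e\<in>(UNIV :: ('m \<Rightarrow> 'x) set). \<Sum>x\<in>UNIV. h x)"
    by (intro sum.cong refl sum.reindex_bij_witness[where i="\<lambda>x. _ - x" and j="\<lambda>x. _ - x"]) auto
  finally show ?thesis by simp
qed

lemma P_js_le_js_error:
  fixes PM :: "'m::finite \<Rightarrow> real" and W :: "'a::finite \<Rightarrow> 'b::finite \<Rightarrow> real"
  shows "P_js PM W \<le> js_error PM W e d"
  unfolding P_js_def by (rule cINF_lower2[where x="(e, d)"]) (auto intro: bdd_below_finite)

lemma js_error_cond_add_channel:
  fixes PXZ :: "('x::{ab_group_add,finite}) \<times> ('z::finite) \<Rightarrow> real" and PM :: "'m::finite \<Rightarrow> real"
  shows "js_error PM (cond_add_channel PXZ) e d =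
    (\<Sum>m\<in>UNIV. \<Sum>p\<in>UNIV. PM m * PXZ p * of_bool (d (e m + fst p, snd p) \<noteq> m))"
proof -
  have "(\<Sum>y\<in>{y. d y \<noteq> m}. cond_add_channel PXZ (e m) y)
      = (\<Sum>p\<in>UNIV. PXZ p * of_bool (d (e m + fst p, snd p) \<noteq> m))" for m
  proof -
    have "(\<Sum>y\<in>{y. d y \<noteq> m}. cond_add_channel PXZ (e m) y)
        = (\<Sum>y\<in>UNIV. cond_add_channel PXZ (e m) y * of_bool (d y \<noteq> m))"
      using sum.inter_filter[of UNIV "cond_add_channel PXZ (e m)" "\<lambda>y. d y \<noteq> m"] by simp
    also have "\<dots> = (\<Sum>p\<in>UNIV. PXZ p * of_bool (d (e m + fst p, snd p) \<noteq> m))"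
      by (rule sum.reindex_bij_witness[where i="\<lambda>p. (e m + fst p, snd p)" and j="\<lambda>y. (fst y - e m, snd y)"])
         (auto simp: cond_add_channel_def)
    finally show ?thesis .
  qed
  then show ?thesis
    unfolding js_error_def by (simp only: sum_distrib_left mult.assoc)
qed

lemma cond_X_Z_nonneg:
  assumes "\<And>p. 0 \<le> PXZ p"
  shows "0 \<le> cond_X_Z PXZ x z"
  unfolding cond_X_Z_def marg_Z_def using assms by (simp add: sum_nonneg)

lemma sum_cond_X_Z_le_1: "(\<Sum>x\<in>UNIV. cond_X_Z PXZ x z) \<le> 1"
proof -
  have "(\<Sum>x\<in>UNIV. cond_X_Z PXZ x z) = marg_Z PXZ z / marg_Z PXZ z"
    unfolding cond_X_Z_def sum_divide_distrib[symmetric] by (simp add: marg_Z_def)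
  also have "\<dots> \<le> 1" by (cases "marg_Z PXZ z = 0") auto
  finally show ?thesis .
qed

lemma sum_of_bool_threshold_cond_X_Z_le:
  fixes PXZ :: "'x::finite \<times> 'z \<Rightarrow> real" and PM :: "'m::finite \<Rightarrow> real"
  assumes "is_distr PM" and "\<And>p. 0 \<le> PXZ p" and "0 < t"
  shows "(\<Sum>m\<in>UNIV. \<Sum>x\<in>UNIV. of_bool (t < PM m * cond_X_Z PXZ x z)) \<le> 1 / t"
proof -
  have PM_nonneg: "0 \<le> PM m" for m
    using assms(1) unfolding is_distr_def by simp
  have "(\<Sum>m\<in>UNIV. \<Sum>x\<in>UNIV. of_bool (t < PM m * cond_X_Z PXZ x z))
      \<le> (\<Sum>m\<in>UNIV. \<Sum>x\<in>UNIV. PM m * cond_X_Z PXZ x z / t)"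
    using assms(2,3) PM_nonneg
    by (intro sum_mono of_bool_less_le_divide mult_nonneg_nonneg cond_X_Z_nonneg)
  also have "\<dots> = (\<Sum>m\<in>UNIV. PM m) * (\<Sum>x\<in>UNIV. cond_X_Z PXZ x z) / t"
    by (simp add: sum_product sum_divide_distrib)
  also have "\<dots> \<le> 1 / t"
    using assms(1,3) sum_cond_X_Z_le_1[of PXZ z]
    by (intro divide_right_mono) (auto simp: is_distr_def)
  finally show ?thesis .
qed

lemma sum_of_bool_le_eq_sum_support:
  fixes PXZ :: "'x::finite \<times> 'z::finite \<Rightarrow> real" and PM :: "'m::finite \<Rightarrow> real"
  assumes "\<And>p. 0 \<le> PXZ p"
  shows "(\<Sum>m\<in>UNIV. \<Sum>p\<in>UNIV. PM m * PXZ p * of_bool (L m (fst p) (snd p) \<le> t))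
    = (\<Sum>(m, x, z)\<in>{(m, x, z). PXZ (x, z) > 0 \<and> L m x z \<le> t}. PM m * PXZ (x, z))"
proof -
  have "(\<Sum>m\<in>UNIV. \<Sum>p\<in>UNIV. PM m * PXZ p * of_bool (L m (fst p) (snd p) \<le> t))
      = (\<Sum>(m, x, z)\<in>UNIV. if PXZ (x, z) > 0 \<and> L m x z \<le> t then PM m * PXZ (x, z) else 0)"
    unfolding sum.cartesian_product UNIV_Times_UNIV
  proof (rule sum.cong[OF refl])
    fix q :: "'m \<times> 'x \<times> 'z"
    obtain m x z where q: "q = (m, x, z)" by (cases q)
    show "(case q of (m, p) \<Rightarrow> PM m * PXZ p * of_bool (L m (fst p) (snd p) \<le> t))
        = (case q of (m, x, z) \<Rightarrow> if PXZ (x, z) > 0 \<and> L m x z \<le> t then PM m * PXZ (x, z) else 0)"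
      using assms[of "(x, z)"] unfolding q by (cases "PXZ (x, z) = 0") auto
  qed
  also have "\<dots> = (\<Sum>(m, x, z)\<in>{(m, x, z). PXZ (x, z) > 0 \<and> L m x z \<le> t}. PM m * PXZ (x, z))"
    by (simp add: sum.If_cases split_def)
  finally show ?thesis .
qed

text \<open>If no message passes the threshold the decoder output is arbitrary; this case is charged
  to the true message failing the threshold.\<close>
definition threshold_decoder ::
  "('m \<Rightarrow> 'x \<Rightarrow> 'z \<Rightarrow> real) \<Rightarrow> real \<Rightarrow> ('m \<Rightarrow> 'x::ab_group_add) \<Rightarrow> 'x \<times> 'z \<Rightarrow> 'm" where
  "threshold_decoder L t e y = (SOME m. t < L m (fst y - e m) (snd y))"

definition threshold_competitors ::
  "('m \<Rightarrow> 'x \<Rightarrow> 'z \<Rightarrow> real) \<Rightarrow> real \<Rightarrow> ('m \<Rightarrow> 'x::ab_group_add) \<Rightarrow> 'm \<Rightarrow> 'x \<Rightarrow> 'z \<Rightarrow> real" where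
  "threshold_competitors L t e m x z = (\<Sum>m'\<in>-{m}. of_bool (t < L m' (e m + x - e m') z))"

lemma threshold_competitors_nonneg: "0 \<le> threshold_competitors L t e m x z"
  unfolding threshold_competitors_def by (simp add: sum_nonneg)

lemma threshold_decoder_error_le:
  fixes L :: "'m::finite \<Rightarrow> 'x::ab_group_add \<Rightarrow> 'z \<Rightarrow> real"
  shows "of_bool (threshold_decoder L t e (e m + x, z) \<noteq> m)
    \<le> of_bool (L m x z \<le> t) + threshold_competitors L t e m x z"
proof (cases "L m x z \<le> t")
  case True
  then show ?thesis using threshold_competitors_nonneg[of L t e m x z] by simp
next
  case False
  define m' where "m' = threshold_decoder L t e (e m + x, z)"
  have passes: "t < L m' (e m + x - e m') z"
    unfolding m'_def threshold_decoder_def fst_conv snd_conv by (rule someI[of _ m]) (use False in simp)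
  show ?thesis
  proof (cases "m' = m")
    case True
    then show ?thesis
      using threshold_competitors_nonneg[of L t e m x z] by (simp add: m'_def)
  next
    case False
    have "of_bool (t < L m' (e m + x - e m') z) \<le> threshold_competitors L t e m x z"
      unfolding threshold_competitors_def using False by (intro member_le_sum) auto
    then show ?thesis
      using False passes by (simp flip: m'_def)
  qed
qed

lemma js_error_threshold_decoder_le:
  fixes PXZ :: "'x::{ab_group_add,finite} \<times> 'z::finite \<Rightarrow> real" and PM :: "'m::finite \<Rightarrow> real"
  assumes "\<And>p. 0 \<le> PXZ p" and "\<And>m. 0 \<le> PM m"
  shows "js_error PM (cond_add_channel PXZ) e (threshold_decoder L t e)
    \<le> (\<Sum>m\<in>UNIV. \<Sum>p\<in>UNIV. PM m * PXZ p * of_bool (L m (fst p) (snd p) \<le> t))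
      + (\<Sum>m\<in>UNIV. \<Sum>p\<in>UNIV. PM m * PXZ p * threshold_competitors L t e m (fst p) (snd p))"
proof -
  have "js_error PM (cond_add_channel PXZ) e (threshold_decoder L t e)
      \<le> (\<Sum>m\<in>UNIV. \<Sum>p\<in>UNIV. PM m * PXZ p *
            (of_bool (L m (fst p) (snd p) \<le> t) + threshold_competitors L t e m (fst p) (snd p)))"
    unfolding js_error_cond_add_channel using assms
    by (intro sum_mono mult_left_mono threshold_decoder_error_le mult_nonneg_nonneg)
  then show ?thesis
    by (simp add: distrib_left sum.distrib)
qed

lemma sum_threshold_competitors_le:
  fixes L :: "'m::finite \<Rightarrow> 'x::{ab_group_add,finite} \<Rightarrow> 'z \<Rightarrow> real"
  assumes "(\<Sum>m'\<in>UNIV. \<Sum>x'\<in>UNIV. of_bool (t < L m' x' z)) \<le> K"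
  shows "(\<Sum>e\<in>UNIV. threshold_competitors L t e m x z) \<le> real CARD('m \<Rightarrow> 'x) / real CARD('x) * K"
proof -
  define r where "r = real CARD('m \<Rightarrow> 'x) / real CARD('x)"
  have r_nonneg: "0 \<le> r" unfolding r_def by simp
  have "(\<Sum>e\<in>UNIV. threshold_competitors L t e m x z)
      = (\<Sum>m'\<in>-{m}. \<Sum>e\<in>UNIV. of_bool (t < L m' (e m + x - e m') z))"
    unfolding threshold_competitors_def by (rule sum.swap)
  also have "\<dots> = (\<Sum>m'\<in>-{m}. r * (\<Sum>x'\<in>UNIV. of_bool (t < L m' x' z)))"
  proof (rule sum.cong[OF refl])
    fix m' assume "m' \<in> -{m}"
    then have "m \<noteq> m'" by auto
    from sum_shift_difference_funs[OF this, of "\<lambda>x'. of_bool (t < L m' x' z)" x]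
    show "(\<Sum>e\<in>UNIV. of_bool (t < L m' (e m + x - e m') z)) = r * (\<Sum>x'\<in>UNIV. of_bool (t < L m' x' z))"
      unfolding r_def by (simp add: field_simps)
  qed
  also have "\<dots> \<le> (\<Sum>m'\<in>UNIV. r * (\<Sum>x'\<in>UNIV. of_bool (t < L m' x' z)))"
    using r_nonneg by (intro sum_mono2) (auto intro: sum_nonneg)
  also have "\<dots> \<le> r * K"
    using assms r_nonneg by (simp add: sum_distrib_left[symmetric] mult_left_mono)
  finally show ?thesis unfolding r_def .
qed

lemma exists_code_threshold_decoder:
  fixes PXZ :: "'x::{ab_group_add,finite} \<times> 'z::finite \<Rightarrow> real" and PM :: "'m::finite \<Rightarrow> real"
    and L :: "'m \<Rightarrow> 'x \<Rightarrow> 'z \<Rightarrow> real"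
  assumes "is_distr PXZ" and "is_distr PM"
    and count_le: "\<And>z. (\<Sum>m\<in>UNIV. \<Sum>x\<in>UNIV. of_bool (t < L m x z)) \<le> K"
  shows "\<exists>e. js_error PM (cond_add_channel PXZ) e (threshold_decoder L t e)
    \<le> (\<Sum>(m, x, z)\<in>{(m, x, z). PXZ (x, z) > 0 \<and> L m x z \<le> t}. PM m * PXZ (x, z))
      + K / real CARD('x)"
proof -
  have PXZ_nonneg: "\<And>p. 0 \<le> PXZ p" and PM_nonneg: "\<And>m. 0 \<le> PM m"
    using assms(1,2) unfolding is_distr_def by auto
  define A where "A = (\<Sum>m\<in>UNIV. \<Sum>p\<in>UNIV. PM m * PXZ p * of_bool (L m (fst p) (snd p) \<le> t))"
  define B where "B e = (\<Sum>m\<in>UNIV. \<Sum>p\<in>UNIV. PM m * PXZ p * threshold_competitors L t e m (fst p) (snd p))"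
    for e :: "'m \<Rightarrow> 'x"
  define r where "r = real CARD('m \<Rightarrow> 'x) / real CARD('x)"
  have "(\<Sum>e\<in>UNIV. B e)
      = (\<Sum>m\<in>UNIV. \<Sum>e\<in>UNIV. \<Sum>p\<in>UNIV. PM m * PXZ p * threshold_competitors L t e m (fst p) (snd p))"
    unfolding B_def by (rule sum.swap)
  also have "\<dots> = (\<Sum>m\<in>UNIV. \<Sum>p\<in>UNIV. \<Sum>e\<in>UNIV. PM m * PXZ p * threshold_competitors L t e m (fst p) (snd p))"
    by (intro sum.cong refl sum.swap)
  also have "\<dots> = (\<Sum>m\<in>UNIV. \<Sum>p\<in>UNIV. PM m * PXZ p * (\<Sum>e\<in>UNIV. threshold_competitors L t e m (fst p) (snd p)))"
    by (simp add: sum_distrib_left)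
  also have "\<dots> \<le> (\<Sum>m\<in>UNIV. \<Sum>p\<in>UNIV. PM m * PXZ p * (r * K))"
    unfolding r_def using PXZ_nonneg PM_nonneg
    by (intro sum_mono mult_left_mono sum_threshold_competitors_le count_le mult_nonneg_nonneg)
  also have "\<dots> = r * K"
    using assms(1,2) by (simp add: is_distr_def flip: sum_distrib_left sum_distrib_right)
  finally have sum_B_le: "(\<Sum>e\<in>UNIV. B e) \<le> r * K" .
  have "(\<Sum>e\<in>UNIV. js_error PM (cond_add_channel PXZ) e (threshold_decoder L t e))
      \<le> (\<Sum>e\<in>UNIV. A + B e)"
    unfolding A_def B_def by (intro sum_mono js_error_threshold_decoder_le PXZ_nonneg PM_nonneg)
  also have "\<dots> \<le> real CARD('m \<Rightarrow> 'x) * (A + K / real CARD('x))"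
    using sum_B_le unfolding r_def by (simp add: sum.distrib distrib_left)
  finally obtain e where "js_error PM (cond_add_channel PXZ) e (threshold_decoder L t e)
      \<le> A + K / real CARD('x)"
    using ex_le_of_sum_le_card_mult[of "UNIV :: ('m \<Rightarrow> 'x) set"] by auto
  then show ?thesis
    using sum_of_bool_le_eq_sum_support[OF PXZ_nonneg, where PM=PM and L=L and t=t] unfolding A_def by auto
qed

theorem mainTheorem4:
  fixes PXZ :: "('x::{ab_group_add,finite}) \<times> ('z::finite) \<Rightarrow> real"
    and PM :: "'m::finite \<Rightarrow> real"
    and c :: real
  assumes "is_distr PXZ" and "is_distr PM" and "c > 0"
  shows "P_js PM (cond_add_channel PXZ) \<le>
    (\<Sum>(m, x, z)\<in>{(m, x, z). PXZ (x, z) > 0 \<and>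
          PM m * cond_X_Z PXZ x z \<le> c / real (CARD('x))}.
        PM m * PXZ (x, z)) + 1 / c"
proof -
  define N where "N = real CARD('x)"
  define L where "L m x z = PM m * cond_X_Z PXZ x z" for m x z
  have "0 < N" unfolding N_def by simp
  have PXZ_nonneg: "\<And>p. 0 \<le> PXZ p"
    using assms(1) unfolding is_distr_def by auto
  have count_le: "(\<Sum>m\<in>UNIV. \<Sum>x\<in>UNIV. of_bool (c / N < L m x z)) \<le> N / c" for z
    using sum_of_bool_threshold_cond_X_Z_le[OF assms(2) PXZ_nonneg, where t="c / N" and z=z]
      \<open>0 < N\<close> assms(3)
    unfolding L_def by simp
  have "N / c / real CARD('x) = 1 / c"
    using \<open>0 < N\<close> unfolding N_def by simp
  then obtain e where "js_error PM (cond_add_channel PXZ) e (threshold_decoder L (c / N) e)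
      \<le> (\<Sum>(m, x, z)\<in>{(m, x, z). PXZ (x, z) > 0 \<and> L m x z \<le> c / N}. PM m * PXZ (x, z)) + 1 / c"
    using exists_code_threshold_decoder[where L=L, OF assms(1,2) count_le] by auto
  then show ?thesis
    unfolding L_def N_def by (meson P_js_le_js_error order_trans)
qed

end
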